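(* In the Simon urn described in the context, with fixed trigger probability $p\in(0,1)$, for every integer $c\ge2$ the series $$\Lambda_\infty(c,p)=\sum_{i=c+1}^{\infty}\binom{i-2}{c-2}\frac{(1-p)^i\,\Gamma(i)}{\Gamma(i+1-p)}$$ converges, and as $n\to\infty$, $$\mathbb E[K_{n,c}]\sim p^{c-1}\left(\frac{\Lambda_\infty(c,p)}{(1-p)^c}+\frac{\Gamma(c)}{\Gamma(c-p+1)}\right)n^{1-p}.$$
   Context: Simon urn. The urn is empty at time $0$. Let $B_0=1$ and let $(B_n)_{n\ge1}$ be i.i.d. Bernoulli random variables with $\Pr(B_n=1)=p\in(0,1)$, independent of everything else. Colors are labelled $1,2,\dots$ in order of first appearance. At each time $n\ge1$: if $B_{n-1}=1$, one ball of a new color is added and registered; if $B_{n-1}=0$, a ball is drawn uniformly at random from the urn, its color is registered, and one additional ball of that color is added. $K_{n,c}$ denotes the number of times color $c$ has been registered up to and including time $n$ (equal to the number of balls of color $c$ at time $n$), with $K_{n,c}=0$ if color $c$ has not yet appeared. $\Gamma$ is the gamma function; $a_n\sim b_n$ means $a_n/b_n\to1$. *)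

theory Defs
  imports "HOL-Probability.Probability" "HOL-Library.Landau_Symbols"
begin

text \<open>State of the Simon urn after time n: (urn contents as a multiset of colour labels,
  number of colours seen so far, the Bernoulli variable B_n governing step n+1).
  Colours are labelled 1,2,... in order of first appearance.\<close>
type_synonym simon_state = "nat multiset \<times> nat \<times> bool"

definition simon_step :: "real \<Rightarrow> simon_state \<Rightarrow> simon_state pmf" where
  "simon_step p s = (case s of (U, m, b) \<Rightarrow>
     do {
       (U', m') \<leftarrow> (if b then return_pmf (U + {#Suc m#}, Suc m)
                    else map_pmf (\<lambda>c. (U + {#c#}, m)) (pmf_of_multiset U));
       b' \<leftarrow> bernoulli_pmf p;
       return_pmf (U', m', b')
     })"

fun simon_dist :: "real \<Rightarrow> nat \<Rightarrow> simon_state pmf" where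
  "simon_dist p 0 = return_pmf ({#}, 0, True)"
| "simon_dist p (Suc n) = simon_dist p n \<bind> simon_step p"

definition K :: "nat \<Rightarrow> simon_state \<Rightarrow> nat" where
  "K c s = count (fst s) c"

definition simon_EK :: "real \<Rightarrow> nat \<Rightarrow> nat \<Rightarrow> real" where
  "simon_EK p n c = measure_pmf.expectation (simon_dist p n) (\<lambda>s. real (K c s))"

definition Lambda_term :: "nat \<Rightarrow> real \<Rightarrow> nat \<Rightarrow> real" where
  "Lambda_term c p i = real ((i - 2) choose (c - 2)) * (1 - p) ^ i * Gamma (real i) / Gamma (real i + 1 - p)"

definition Lambda_inf :: "nat \<Rightarrow> real \<Rightarrow> real" where
  "Lambda_inf c p = (\<Sum>k. Lambda_term c p (k + c + 1))"

end

theory Submission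
  imports Defs "HOL-Real_Asymp.Real_Asymp"
begin

text \<open>After the forced first step, every step opens a new colour with probability p, so the number
  of colours at time n + 1 is 1 + Bin(n, p). Conditioning on the state at time n \<ge> 1, whose flag is a
  fresh Bernoulli(p) variable, gives the recursion
    E K(n+1, c) = (1 + (1 - p)/n) E K(n, c) + p P(c - 1 colours at time n).
  Its integrating factor Gamma(n + 1 - p)/Gamma(n) is asymptotic to n^(1-p), so E K(n, c) is this factor
  times the partial sums of a convergent series. The terms of that series vanish before time c - 1;
  the term at time c - 1, where colour c is opened, is p^(c-1) Gamma(c)/Gamma(c - p + 1); and the later
  terms are p^(c-1)/(1 - p)^c times the terms of Lambda_inf(c, p).\<close>

lemma expectation_pmf_cong:
  fixes f g :: "'a \<Rightarrow> real"
  assumes "\<And>x. x \<in> set_pmf M \<Longrightarrow> f x = g x"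
  shows "measure_pmf.expectation M f = measure_pmf.expectation M g"
  using assms by (intro integral_cong_AE) (auto simp: AE_measure_pmf_iff)

lemma expectation_bind_pmf_finite:
  fixes f :: "'b \<Rightarrow> real"
  assumes "finite (set_pmf M)" "\<And>x. x \<in> set_pmf M \<Longrightarrow> finite (set_pmf (N x))"
  shows "measure_pmf.expectation (M \<bind> N) f =
    measure_pmf.expectation M (\<lambda>x. measure_pmf.expectation (N x) f)"
proof -
  have "measure_pmf.expectation (M \<bind> N) f =
      (\<Sum>x\<in>set_pmf M. pmf M x *\<^sub>R measure_pmf.expectation (N x) f)"
    using assms by (intro pmf_expectation_bind) auto
  also have "\<dots> = measure_pmf.expectation M (\<lambda>x. measure_pmf.expectation (N x) f)"
    using assms by (subst integral_measure_pmf[of "set_pmf M"]) auto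
  finally show ?thesis .
qed

lemma expectation_pmf_of_multiset_count_add:
  assumes "U \<noteq> {#}"
  shows "measure_pmf.expectation (pmf_of_multiset U) (\<lambda>x. real (count (U + {#x#}) c)) =
    real (count U c) * (1 + 1 / real (size U))"
proof -
  have "measure_pmf.expectation (pmf_of_multiset U) (\<lambda>x. real (count (U + {#x#}) c)) =
      measure_pmf.expectation (pmf_of_multiset U) (\<lambda>x. real (count U c) + indicator {c} x)"
    by (rule expectation_pmf_cong) (simp add: indicator_def)
  also have "\<dots> = real (count U c) + measure_pmf.prob (pmf_of_multiset U) {c}"
    using assms by (subst Bochner_Integration.integral_add) (auto intro!: integrable_measure_pmf_finite)
  also have "measure_pmf.prob (pmf_of_multiset U) {c} = real (count U c) / real (size U)"
    using assms by (simp add: measure_pmf_single)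
  finally show ?thesis
    by (simp add: algebra_simps)
qed

lemma summable_of_nat_choose_mult_power:
  assumes "0 \<le> x" "x < (1::real)"
  shows "summable (\<lambda>n. real (n choose d) * x ^ n)"
proof -
  have ratio: "(\<lambda>n. norm (real (n choose d)) / norm (real (Suc n choose d))) \<longlonglongrightarrow> 1"
  proof (rule Lim_transform_eventually)
    show "(\<lambda>n. (real n + 1 - real d) / (real n + 1)) \<longlonglongrightarrow> 1"
      by real_asymp
    show "\<forall>\<^sub>F n in sequentially. (real n + 1 - real d) / (real n + 1) =
        norm (real (n choose d)) / norm (real (Suc n choose d))"
      using eventually_ge_at_top[of d]
    proof eventually_elim
      case (elim n)
      have "(Suc n - d) * (Suc n choose d) = Suc n * (n choose d)"
        using binomial_absorb_comp[of "Suc n" d] by simp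
      then have "real (Suc n - d) * real (Suc n choose d) = real (Suc n) * real (n choose d)"
        by (metis of_nat_mult)
      moreover have "real (Suc n choose d) > 0" "real (Suc n - d) = real n + 1 - real d"
        using elim by (simp_all add: of_nat_diff)
      ultimately show ?case
        by (simp add: field_simps)
    qed
  qed
  have "conv_radius (\<lambda>n. real (n choose d)) = 1"
    by (rule conv_radius_ratio_limit_nonzero[OF _ _ ratio]) simp_all
  then show ?thesis
    using assms by (intro summable_in_conv_radius) simp
qed

lemma linear_recurrence_closed_form:
  fixes x P r b :: "nat \<Rightarrow> real"
  assumes x_Suc: "\<And>n. n \<ge> m \<Longrightarrow> x (Suc n) = r n * x n + b n"
    and P_Suc: "\<And>n. n \<ge> m \<Longrightarrow> P (Suc n) = r n * P n"
    and P_nonzero: "\<And>n. n \<ge> m \<Longrightarrow> P n \<noteq> 0"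
    and "m \<le> n"
  shows "x n = P n * (x m / P m + (\<Sum>t\<in>{m..<n}. b t / P (Suc t)))"
  using \<open>m \<le> n\<close>
proof (induction n rule: dec_induct)
  case base
  then show ?case
    using P_nonzero by simp
next
  case (step n)
  define S where "S = x m / P m + (\<Sum>t\<in>{m..<n}. b t / P (Suc t))"
  have "P (Suc n) \<noteq> 0"
    using P_nonzero step.hyps by simp
  then have "x (Suc n) = P (Suc n) * S + P (Suc n) * (b n / P (Suc n))"
    using step by (simp add: x_Suc P_Suc S_def)
  also have "\<dots> = P (Suc n) * (x m / P m + (\<Sum>t\<in>{m..<Suc n}. b t / P (Suc t)))"
    using step.hyps by (simp add: S_def algebra_simps)
  finally show ?case .
qed

lemma pmf_binomial_pmf_Suc_Suc:
  assumes "0 \<le> p" "p \<le> 1"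
  shows "pmf (binomial_pmf (Suc n) p) (Suc k) =
    p * pmf (binomial_pmf n p) k + (1 - p) * pmf (binomial_pmf n p) (Suc k)"
proof (cases "k < n")
  case True
  then have "n - k = Suc (n - Suc k)"
    by simp
  then show ?thesis
    using assms by (simp add: algebra_simps)
qed (use assms in \<open>simp add: not_less binomial_eq_0\<close>)

definition gamma_ratio :: "real \<Rightarrow> nat \<Rightarrow> real" where
  "gamma_ratio a n = Gamma (real n + a) / Gamma (real n)"

lemma gamma_ratio_pos:
  assumes "a > -1" "n \<ge> 1"
  shows "gamma_ratio a n > 0"
  using assms unfolding gamma_ratio_def by (intro divide_pos_pos Gamma_real_pos) auto

lemma gamma_ratio_Suc:
  assumes "a > -1" "n \<ge> 1"
  shows "gamma_ratio a (Suc n) = (1 + a / real n) * gamma_ratio a n"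
proof -
  have "real n + a \<notin> \<int>\<^sub>\<le>\<^sub>0" "real n \<notin> \<int>\<^sub>\<le>\<^sub>0"
    using assms by auto
  then have "Gamma (real (Suc n) + a) = (real n + a) * Gamma (real n + a)"
    "Gamma (real (Suc n)) = real n * Gamma (real n)"
    using Gamma_plus1[of "real n + a"] Gamma_plus1[of "real n"] by (simp_all add: add_ac)
  moreover have "Gamma (real n) > 0"
    using assms by (intro Gamma_real_pos) auto
  ultimately show ?thesis
    using assms unfolding gamma_ratio_def by (simp add: field_simps)
qed

lemma gamma_ratio_mono:
  assumes "a \<ge> 0" "1 \<le> m" "m \<le> n"
  shows "gamma_ratio a m \<le> gamma_ratio a n"
  using assms(3)
proof (induction n rule: dec_induct)
  case (step n)
  have "gamma_ratio a n \<le> (1 + a / real n) * gamma_ratio a n"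
    using gamma_ratio_pos[of a n] assms step.hyps by (simp add: field_simps)
  then show ?case
    using step assms gamma_ratio_Suc[of a n] by simp
qed simp

lemma gamma_ratio_asymp_equiv:
  assumes "a > 0"
  shows "gamma_ratio a \<sim>[at_top] (\<lambda>n. real n powr a)"
proof (rule asymp_equivI')
  have a_nonpos_Ints: "a \<notin> \<int>\<^sub>\<le>\<^sub>0"
    using assms by auto
  have Gamma_a: "Gamma a > 0"
    using assms by (rule Gamma_real_pos)
  have "(\<lambda>n. Gamma a / Gamma_series' a n) \<longlonglongrightarrow> Gamma a / Gamma a"
    using Gamma_a by (intro tendsto_divide tendsto_const Gamma_series'_LIMSEQ) auto
  moreover have "\<forall>\<^sub>F n in sequentially. Gamma a / Gamma_series' a n = gamma_ratio a n / real n powr a"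
    using eventually_ge_at_top[of 1]
  proof eventually_elim
    case (elim n)
    have "fact (n - 1) = Gamma (real n)"
      using Gamma_fact[of "n - 1", where 'a = real] elim by (simp add: of_nat_diff)
    moreover have "pochhammer a n = Gamma (real n + a) / Gamma a"
      using pochhammer_Gamma[OF a_nonpos_Ints, of n] by (simp add: add_ac)
    moreover have "exp (a * ln (real n)) = real n powr a"
      using elim by (simp add: powr_def)
    moreover have "Gamma (real n) > 0" "Gamma (real n + a) > 0" "real n powr a > 0"
      using elim assms by auto
    ultimately show ?case
      using Gamma_a unfolding Gamma_series'_def gamma_ratio_def by (simp add: field_simps)
  qed
  ultimately show "(\<lambda>n. gamma_ratio a n / real n powr a) \<longlonglongrightarrow> 1"
    using Gamma_a by (simp add: Lim_transform_eventually)
qed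

abbreviation urn :: "simon_state \<Rightarrow> nat multiset" where
  "urn s \<equiv> fst s"

abbreviation colours :: "simon_state \<Rightarrow> nat" where
  "colours s \<equiv> fst (snd s)"

abbreviation flag :: "simon_state \<Rightarrow> bool" where
  "flag s \<equiv> snd (snd s)"

lemma simon_step_eq:
  "simon_step p (U, m, b) =
    (if b then map_pmf (\<lambda>b'. (U + {#Suc m#}, Suc m, b')) (bernoulli_pmf p)
     else pmf_of_multiset U \<bind> (\<lambda>x. map_pmf (\<lambda>b'. (U + {#x#}, m, b')) (bernoulli_pmf p)))"
  unfolding simon_step_def
  by (cases b) (simp_all add: map_pmf_def bind_return_pmf bind_assoc_pmf)

lemma size_urn_simon_step:
  "s \<in> set_pmf (simon_step p (U, m, b)) \<Longrightarrow> size (urn s) = Suc (size U)"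
  by (cases b) (auto simp: simon_step_eq)

lemma size_urn_simon_dist:
  "s \<in> set_pmf (simon_dist p n) \<Longrightarrow> size (urn s) = n"
proof (induction n arbitrary: s)
  case (Suc n)
  then obtain s' where "s' \<in> set_pmf (simon_dist p n)" "s \<in> set_pmf (simon_step p s')"
    by auto
  then show ?case
    using Suc.IH size_urn_simon_step[of s p "urn s'" "colours s'" "flag s'"] by simp
qed simp

lemma simon_dist_flag_or_nonempty:
  "s \<in> set_pmf (simon_dist p n) \<Longrightarrow> flag s \<or> urn s \<noteq> {#}"
  using size_urn_simon_dist[of s p n] by (cases n) auto

lemma finite_set_pmf_simon_step:
  assumes "b \<or> U \<noteq> {#}"
  shows "finite (set_pmf (simon_step p (U, m, b)))"
proof -
  have "set_pmf (simon_step p (U, m, b)) \<subseteq>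
      (\<lambda>(x, b'). (U + {#x#}, if b then Suc m else m, b')) ` ((if b then {Suc m} else set_mset U) \<times> UNIV)"
    using assms by (auto simp: simon_step_eq)
  then show ?thesis
    by (rule finite_subset) simp
qed

lemma finite_set_pmf_simon_dist: "finite (set_pmf (simon_dist p n))"
proof (induction n)
  case (Suc n)
  have "finite (set_pmf (simon_step p s))" if "s \<in> set_pmf (simon_dist p n)" for s
    using simon_dist_flag_or_nonempty[OF that] finite_set_pmf_simon_step
    by (metis prod.collapse)
  then show ?case
    using Suc by simp
qed simp

lemma integrable_simon_dist [simp]:
  "integrable (measure_pmf (simon_dist p n)) (f :: simon_state \<Rightarrow> real)"
  by (rule integrable_measure_pmf_finite[OF finite_set_pmf_simon_dist])

definition flag_average :: "real \<Rightarrow> (simon_state \<Rightarrow> real) \<Rightarrow> nat multiset \<Rightarrow> nat \<Rightarrow> real" where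
  "flag_average p f U m = p * f (U, m, True) + (1 - p) * f (U, m, False)"

lemma expectation_simon_step:
  assumes "0 \<le> p" "p \<le> 1" "b \<or> U \<noteq> {#}"
  shows "measure_pmf.expectation (simon_step p (U, m, b)) f =
    (if b then flag_average p f (U + {#Suc m#}) (Suc m)
     else measure_pmf.expectation (pmf_of_multiset U) (\<lambda>x. flag_average p f (U + {#x#}) m))"
  using assms
  by (cases b) (simp_all add: simon_step_eq flag_average_def expectation_bind_pmf_finite mult.commute)

lemma expectation_simon_dist_Suc:
  assumes "0 \<le> p" "p \<le> 1"
  shows "measure_pmf.expectation (simon_dist p (Suc n)) f =
    measure_pmf.expectation (simon_dist p n) (\<lambda>s.
      if flag s then flag_average p f (urn s + {#Suc (colours s)#}) (Suc (colours s))
      else measure_pmf.expectation (pmf_of_multiset (urn s)) (\<lambda>x. flag_average p f (urn s + {#x#}) (colours s)))"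
    (is "_ = ?rhs")
proof -
  have step_defined: "flag s \<or> urn s \<noteq> {#}" if "s \<in> set_pmf (simon_dist p n)" for s
    using that by (rule simon_dist_flag_or_nonempty)
  have "measure_pmf.expectation (simon_dist p (Suc n)) f =
      measure_pmf.expectation (simon_dist p n) (\<lambda>s. measure_pmf.expectation (simon_step p s) f)"
    using step_defined finite_set_pmf_simon_step
    by (simp add: expectation_bind_pmf_finite finite_set_pmf_simon_dist split_paired_all)
  also have "\<dots> = ?rhs"
    using step_defined assms
    by (intro expectation_pmf_cong) (auto simp: expectation_simon_step split_paired_all)
  finally show ?thesis .
qed

lemma flag_average_flag_average:
  "flag_average p (\<lambda>s. flag_average p f (urn s) (colours s)) = flag_average p f"
  by (simp add: flag_average_def algebra_simps fun_eq_iff)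

text \<open>At a positive time the flag was drawn by a fresh \<^term>\<open>bernoulli_pmf p\<close> in the last step,
  independently of urn and colours, so it can be averaged out.\<close>

lemma expectation_simon_dist_Suc_flag_average:
  assumes "0 \<le> p" "p \<le> 1"
  shows "measure_pmf.expectation (simon_dist p (Suc n)) f =
    measure_pmf.expectation (simon_dist p (Suc n)) (\<lambda>s. flag_average p f (urn s) (colours s))"
  unfolding expectation_simon_dist_Suc[OF assms, of n] flag_average_flag_average ..

lemma expectation_simon_dist_step:
  fixes g :: "nat multiset \<Rightarrow> nat \<Rightarrow> real"
  assumes p: "0 \<le> p" "p \<le> 1" and "n \<ge> 1"
  shows "measure_pmf.expectation (simon_dist p (Suc n)) (\<lambda>s. g (urn s) (colours s)) =
    measure_pmf.expectation (simon_dist p n) (\<lambda>s.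
      p * g (urn s + {#Suc (colours s)#}) (Suc (colours s)) +
      (1 - p) * measure_pmf.expectation (pmf_of_multiset (urn s)) (\<lambda>x. g (urn s + {#x#}) (colours s)))"
proof -
  obtain k where n: "n = Suc k"
    using \<open>n \<ge> 1\<close> by (cases n) auto
  have "flag_average p (\<lambda>s. g (urn s) (colours s)) = g"
    by (simp add: flag_average_def algebra_simps fun_eq_iff)
  then have "measure_pmf.expectation (simon_dist p (Suc n)) (\<lambda>s. g (urn s) (colours s)) =
      measure_pmf.expectation (simon_dist p n) (\<lambda>s.
        if flag s then g (urn s + {#Suc (colours s)#}) (Suc (colours s))
        else measure_pmf.expectation (pmf_of_multiset (urn s)) (\<lambda>x. g (urn s + {#x#}) (colours s)))"
    by (simp only: expectation_simon_dist_Suc[OF p])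
  also have "\<dots> = measure_pmf.expectation (simon_dist p n) (\<lambda>s.
      p * g (urn s + {#Suc (colours s)#}) (Suc (colours s)) +
      (1 - p) * measure_pmf.expectation (pmf_of_multiset (urn s)) (\<lambda>x. g (urn s + {#x#}) (colours s)))"
    unfolding n
    by (subst expectation_simon_dist_Suc_flag_average[OF p]) (simp add: flag_average_def del: simon_dist.simps)
  finally show ?thesis .
qed

definition prob_colours :: "real \<Rightarrow> nat \<Rightarrow> nat \<Rightarrow> real" where
  "prob_colours p n j = measure_pmf.prob (simon_dist p n) {s. colours s = j}"

lemma prob_colours_eq_expectation:
  "prob_colours p n j = measure_pmf.expectation (simon_dist p n) (\<lambda>s. of_bool (colours s = j))"
proof -
  have "(\<lambda>s. of_bool (colours s = j)) = (indicator {s. colours s = j} :: simon_state \<Rightarrow> real)"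
    by (simp add: fun_eq_iff)
  then show ?thesis
    by (simp add: prob_colours_def)
qed

lemma prob_colours_0: "prob_colours p 0 j = of_bool (j = 0)"
  by (simp add: prob_colours_eq_expectation)

lemma prob_colours_1: "prob_colours p (Suc 0) j = of_bool (j = Suc 0)"
  by (simp add: prob_colours_eq_expectation simon_step_eq bind_return_pmf)

lemma prob_colours_step:
  assumes p: "0 \<le> p" "p \<le> 1" and "n \<ge> 1"
  shows "prob_colours p (Suc n) j =
    p * measure_pmf.expectation (simon_dist p n) (\<lambda>s. of_bool (Suc (colours s) = j)) +
    (1 - p) * prob_colours p n j"
  unfolding prob_colours_eq_expectation
  using expectation_simon_dist_step[OF assms, of "\<lambda>_ m. of_bool (m = j)"]
  by (simp add: algebra_simps)

lemma prob_colours_step_0: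
  assumes "0 \<le> p" "p \<le> 1" and "n \<ge> 1"
  shows "prob_colours p (Suc n) 0 = (1 - p) * prob_colours p n 0"
  using prob_colours_step[OF assms, of 0] by simp

lemma prob_colours_step_Suc:
  assumes "0 \<le> p" "p \<le> 1" and "n \<ge> 1"
  shows "prob_colours p (Suc n) (Suc j) = p * prob_colours p n j + (1 - p) * prob_colours p n (Suc j)"
  using prob_colours_step[OF assms, of "Suc j"] by (simp add: prob_colours_eq_expectation)

lemma prob_colours_Suc_0:
  assumes "0 \<le> p" "p \<le> 1"
  shows "prob_colours p (Suc n) 0 = 0"
  by (induction n) (simp_all add: prob_colours_1 prob_colours_step_0[OF assms])

lemma prob_colours_Suc_Suc:
  assumes "0 \<le> p" "p \<le> 1"
  shows "prob_colours p (Suc n) (Suc j) = pmf (binomial_pmf n p) j"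
proof (induction n arbitrary: j)
  case 0
  show ?case
    using assms by (simp add: prob_colours_1)
next
  case (Suc n)
  show ?case
  proof (cases j)
    case 0
    then show ?thesis
      using assms Suc.IH by (simp add: prob_colours_step_Suc prob_colours_Suc_0)
  next
    case (Suc i)
    then show ?thesis
      using assms Suc.IH by (simp add: prob_colours_step_Suc pmf_binomial_pmf_Suc_Suc del: pmf_binomial)
  qed
qed

lemma simon_EK_1: "c \<noteq> 1 \<Longrightarrow> simon_EK p (Suc 0) c = 0"
  by (simp add: simon_EK_def K_def simon_step_eq bind_return_pmf)

lemma simon_EK_step:
  assumes p: "0 \<le> p" "p \<le> 1" and n: "n \<ge> 1" and "c \<ge> 1"
  shows "simon_EK p (Suc n) c = (1 + (1 - p) / real n) * simon_EK p n c + p * prob_colours p n (c - 1)"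
proof -
  have "simon_EK p (Suc n) c = measure_pmf.expectation (simon_dist p n) (\<lambda>s.
      p * real (count (urn s + {#Suc (colours s)#}) c) +
      (1 - p) * measure_pmf.expectation (pmf_of_multiset (urn s)) (\<lambda>x. real (count (urn s + {#x#}) c)))"
    unfolding simon_EK_def K_def using expectation_simon_dist_step[OF p n, of "\<lambda>U _. real (count U c)"]
    by simp
  also have "\<dots> = measure_pmf.expectation (simon_dist p n) (\<lambda>s.
      (1 + (1 - p) / real n) * real (count (urn s) c) + p * of_bool (colours s = c - 1))"
  proof (rule expectation_pmf_cong)
    fix s assume "s \<in> set_pmf (simon_dist p n)"
    then have size: "size (urn s) = n"
      by (rule size_urn_simon_dist)
    then have nonempty: "urn s \<noteq> {#}"
      using n by auto
    have draw: "measure_pmf.expectation (pmf_of_multiset (urn s)) (\<lambda>x. real (count (urn s + {#x#}) c)) =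
        real (count (urn s) c) * (1 + 1 / real n)"
      by (simp only: expectation_pmf_of_multiset_count_add[OF nonempty] size)
    have new: "real (count (urn s + {#Suc (colours s)#}) c) = real (count (urn s) c) + of_bool (colours s = c - 1)"
      using \<open>c \<ge> 1\<close> by auto
    show "p * real (count (urn s + {#Suc (colours s)#}) c) +
        (1 - p) * measure_pmf.expectation (pmf_of_multiset (urn s)) (\<lambda>x. real (count (urn s + {#x#}) c)) =
        (1 + (1 - p) / real n) * real (count (urn s) c) + p * of_bool (colours s = c - 1)"
      unfolding draw new using n by (simp add: field_simps)
  qed
  also have "\<dots> = (1 + (1 - p) / real n) * simon_EK p n c + p * prob_colours p n (c - 1)"
    by (simp add: simon_EK_def K_def prob_colours_eq_expectation)
  finally show ?thesis .
qed

definition simon_EK_series :: "real \<Rightarrow> nat \<Rightarrow> nat \<Rightarrow> real" where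
  "simon_EK_series p c t = p * prob_colours p t (c - 1) / gamma_ratio (1 - p) (Suc t)"

lemma simon_EK_eq_partial_sum:
  assumes p: "0 \<le> p" "p < 1" and "c \<ge> 2" "n \<ge> 1"
  shows "simon_EK p n c = gamma_ratio (1 - p) n * (\<Sum>t<n. simon_EK_series p c t)"
proof -
  have gamma_ratio_nonzero: "gamma_ratio (1 - p) m \<noteq> 0" if "m \<ge> 1" for m
    using gamma_ratio_pos[of "1 - p" m] p that by simp
  have "simon_EK p n c = gamma_ratio (1 - p) n * (simon_EK p 1 c / gamma_ratio (1 - p) 1 +
      (\<Sum>t\<in>{1..<n}. p * prob_colours p t (c - 1) / gamma_ratio (1 - p) (Suc t)))"
    using assms gamma_ratio_nonzero
    by (intro linear_recurrence_closed_form[where r = "\<lambda>n. 1 + (1 - p) / real n"])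
      (auto simp: simon_EK_step gamma_ratio_Suc)
  moreover have "simon_EK_series p c 0 = 0"
    using \<open>c \<ge> 2\<close> by (simp add: simon_EK_series_def prob_colours_0)
  ultimately show ?thesis
    using \<open>c \<ge> 2\<close> by (simp add: simon_EK_1 sum_shift_lb_Suc0_0_upt lessThan_atLeast0 simon_EK_series_def)
qed

lemma simon_EK_series_below:
  assumes "0 \<le> p" "p \<le> 1" "t < c - 1"
  shows "simon_EK_series p c t = 0"
proof (cases t)
  case 0
  then show ?thesis
    using assms by (simp add: simon_EK_series_def prob_colours_0)
next
  case (Suc i)
  obtain d where "c = d + 2"
    using assms Suc by (intro that[of "c - 2"]) simp
  then show ?thesis
    using assms Suc by (simp add: simon_EK_series_def prob_colours_Suc_Suc binomial_eq_0)
qed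

lemma simon_EK_series_newest:
  assumes "0 \<le> p" "p \<le> 1" "c \<ge> 2"
  shows "simon_EK_series p c (c - 1) = p ^ (c - 1) / gamma_ratio (1 - p) c"
proof -
  obtain d where "c = d + 2"
    using assms by (intro that[of "c - 2"]) simp
  then show ?thesis
    using assms by (simp add: simon_EK_series_def prob_colours_Suc_Suc)
qed

lemma Lambda_term_eq_gamma_ratio:
  "Lambda_term c p i = real ((i - 2) choose (c - 2)) * (1 - p) ^ i / gamma_ratio (1 - p) i"
  by (simp add: Lambda_term_def gamma_ratio_def add_diff_eq)

lemma simon_EK_series_tail:
  assumes "0 \<le> p" "p < 1" "c \<ge> 2"
  shows "simon_EK_series p c (k + c) = p ^ (c - 1) / (1 - p) ^ c * Lambda_term c p (k + c + 1)"
proof -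
  obtain d where c: "c = d + 2"
    using assms by (intro that[of "c - 2"]) simp
  have "k + c = Suc (Suc (k + d))" "k + c + 1 - 2 = Suc (k + d)"
    using c by simp_all
  moreover have "(1 - p) ^ (k + c + 1) = (1 - p) ^ c * (1 - p) ^ Suc k"
    by (simp add: ac_simps flip: power_add)
  ultimately show ?thesis
    using assms c by (simp add: simon_EK_series_def prob_colours_Suc_Suc Lambda_term_eq_gamma_ratio)
qed

lemma Lambda_term_nonneg:
  assumes "p < 1" "i \<ge> 1"
  shows "Lambda_term c p i \<ge> 0"
  using gamma_ratio_pos[of "1 - p" i] assms by (simp add: Lambda_term_eq_gamma_ratio)

lemma summable_Lambda_term:
  assumes "0 < p" "p < 1"
  shows "summable (Lambda_term c p)"
proof -
  have "summable (\<lambda>i. Lambda_term c p (i + 2))"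
  proof (rule summable_comparison_test')
    show "summable (\<lambda>i. (1 - p) ^ 2 / gamma_ratio (1 - p) 1 * (real (i choose (c - 2)) * (1 - p) ^ i))"
      using assms by (intro summable_mult summable_of_nat_choose_mult_power) auto
  next
    fix i :: nat
    have "gamma_ratio (1 - p) 1 \<le> gamma_ratio (1 - p) (i + 2)" "gamma_ratio (1 - p) 1 > 0"
      using assms by (auto intro: gamma_ratio_mono gamma_ratio_pos)
    then have "Lambda_term c p (i + 2) \<le> real (i choose (c - 2)) * (1 - p) ^ (i + 2) / gamma_ratio (1 - p) 1"
      using assms unfolding Lambda_term_eq_gamma_ratio by (auto intro!: divide_left_mono)
    then show "norm (Lambda_term c p (i + 2)) \<le>
        (1 - p) ^ 2 / gamma_ratio (1 - p) 1 * (real (i choose (c - 2)) * (1 - p) ^ i)"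
      using Lambda_term_nonneg[of p "i + 2" c] assms by (simp add: power_add power2_eq_square mult_ac)
  qed
  then show ?thesis
    by (rule summable_iff_shift[THEN iffD1])
qed

lemma summable_Lambda_inf:
  assumes "0 < p" "p < 1"
  shows "summable (\<lambda>k. Lambda_term c p (k + c + 1))"
  using summable_Lambda_term[OF assms] summable_iff_shift[of "Lambda_term c p" "c + 1"] by simp

lemma Lambda_inf_nonneg:
  assumes "0 < p" "p < 1"
  shows "Lambda_inf c p \<ge> 0"
  unfolding Lambda_inf_def using assms summable_Lambda_inf[OF assms]
  by (intro suminf_nonneg) (auto intro: Lambda_term_nonneg)

lemma simon_EK_series_sums:
  assumes p: "0 < p" "p < 1" and c: "c \<ge> 2"
  shows "simon_EK_series p c sums
    (p ^ (c - 1) * (Lambda_inf c p / (1 - p) ^ c + Gamma (real c) / Gamma (real c - p + 1)))"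
proof -
  have tail: "(\<lambda>k. simon_EK_series p c (k + c)) sums (p ^ (c - 1) / (1 - p) ^ c * Lambda_inf c p)"
    using sums_mult[OF summable_sums[OF summable_Lambda_inf[OF p]], of "p ^ (c - 1) / (1 - p) ^ c"] p c
    unfolding Lambda_inf_def by (simp add: simon_EK_series_tail)
  have "{..<c} = insert (c - 1) {..<c - 1}"
    using c by auto
  then have head: "(\<Sum>t<c. simon_EK_series p c t) = p ^ (c - 1) / gamma_ratio (1 - p) c"
    using simon_EK_series_newest[of p c] simon_EK_series_below[of p] p c by simp
  have "gamma_ratio (1 - p) c = Gamma (real c - p + 1) / Gamma (real c)"
    by (simp add: gamma_ratio_def algebra_simps)
  then show ?thesis
    using tail by (simp add: sums_iff_shift head algebra_simps)
qed

theorem corollary4p2: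
  fixes p :: real and c :: nat
  assumes "0 < p" "p < 1" "c \<ge> 2"
  shows "summable (\<lambda>k. Lambda_term c p (k + c + 1)) \<and>
    (\<lambda>n. simon_EK p n c) \<sim>[at_top]
    (\<lambda>n. p ^ (c - 1) * (Lambda_inf c p / (1 - p) ^ c + Gamma (real c) / Gamma (real c - p + 1))
          * real n powr (1 - p))"
proof
  note p = assms(1,2) and c = assms(3)
  show "summable (\<lambda>k. Lambda_term c p (k + c + 1))"
    using p by (rule summable_Lambda_inf)
  define C where "C = p ^ (c - 1) * (Lambda_inf c p / (1 - p) ^ c + Gamma (real c) / Gamma (real c - p + 1))"
  have "Gamma (real c) > 0" "Gamma (real c - p + 1) > 0"
    using p c by (auto intro: Gamma_real_pos)
  then have "C > 0"
    using p Lambda_inf_nonneg[OF p, of c] unfolding C_def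
    by (intro mult_pos_pos add_nonneg_pos divide_nonneg_pos divide_pos_pos) auto
  have "(\<lambda>n. simon_EK p n c) \<sim>[at_top] (\<lambda>n. gamma_ratio (1 - p) n * (\<Sum>t<n. simon_EK_series p c t))"
    using eventually_ge_at_top[of 1]
    by (rule asymp_equiv_refl_ev[OF eventually_mono]) (use p c in \<open>simp add: simon_EK_eq_partial_sum\<close>)
  also have "\<dots> \<sim>[at_top] (\<lambda>n. real n powr (1 - p) * C)"
    using simon_EK_series_sums[OF p c] \<open>C > 0\<close> p unfolding sums_def C_def
    by (intro asymp_equiv_mult gamma_ratio_asymp_equiv tendsto_imp_asymp_equiv_const) auto
  finally show "(\<lambda>n. simon_EK p n c) \<sim>[at_top] (\<lambda>n. C * real n powr (1 - p))"
    by (simp only: mult.commute)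
qed

end
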